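(* Let $\varphi\colon E\to E$ be the homomorphism with $\varphi(e_1)=-e_1$ and $\varphi(e_n)=-e_n+2e_1e_n$ for $n>1$. Then $\varphi$ is an automorphism of order 2, and $E_\varphi$ is $\mathbb{Z}_2$-isomorphic to $E_{can}$.
   Context: $F$ is a field of characteristic zero, $L$ an infinite-dimensional $F$-vector space with basis $e_1,e_2,\ldots$, $E$ its Grassmann algebra. $E_\varphi$ is the $\mathbb{Z}_2$-grading on $E$ by eigenspaces of $\varphi$ for $1$ (degree 0) and $-1$ (degree 1). $E_{can}=E_{(0)}\oplus E_{(1)}$ is the natural grading: $E_{(0)}$ spanned by $1$ and monomials of even length, $E_{(1)}$ by monomials of odd length. $\mathbb{Z}_2$-isomorphic means isomorphic via an algebra isomorphism preserving degree components. *)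

theory Defs
  imports Main
begin

text \<open>Grassmann algebra E over a field F (type 'a) on generators e_1, e_2, ... (indices n \<ge> 1).
An element is a finitely supported coefficient function on the monomial basis
e_S = e_{i1} ... e_{ik} (i1 < ... < ik), S a finite set of positive naturals.\<close>

definition grass :: "(nat set \<Rightarrow> 'a::field) set" where
  "grass = {f. finite {S. f S \<noteq> 0} \<and> (\<forall>S. f S \<noteq> 0 \<longrightarrow> finite S \<and> 0 \<notin> S)}"

definition gadd :: "(nat set \<Rightarrow> 'a::field) \<Rightarrow> (nat set \<Rightarrow> 'a) \<Rightarrow> (nat set \<Rightarrow> 'a)" where
  "gadd f g = (\<lambda>S. f S + g S)"

definition gneg :: "(nat set \<Rightarrow> 'a::field) \<Rightarrow> (nat set \<Rightarrow> 'a)" where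
  "gneg f = (\<lambda>S. - f S)"

definition gscale :: "'a::field \<Rightarrow> (nat set \<Rightarrow> 'a) \<Rightarrow> (nat set \<Rightarrow> 'a)" where
  "gscale c f = (\<lambda>S. c * f S)"

text \<open>Sign of e_S e_T = sign * e_{S \<union> T} for disjoint S, T: (-1)^(number of inversions).\<close>
definition gsign :: "nat set \<Rightarrow> nat set \<Rightarrow> 'a::field" where
  "gsign S T = (- 1) ^ card {(s, t). s \<in> S \<and> t \<in> T \<and> t < s}"

definition gmult :: "(nat set \<Rightarrow> 'a::field) \<Rightarrow> (nat set \<Rightarrow> 'a) \<Rightarrow> (nat set \<Rightarrow> 'a)" where
  "gmult f g = (\<lambda>U. \<Sum>(S, T) \<in> {(S, T). f S \<noteq> 0 \<and> g T \<noteq> 0}.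
      (if S \<inter> T = {} \<and> S \<union> T = U then gsign S T * f S * g T else 0))"

definition gone :: "nat set \<Rightarrow> 'a::field" where
  "gone = (\<lambda>S. if S = {} then 1 else 0)"

definition gen :: "nat \<Rightarrow> nat set \<Rightarrow> 'a::field" where
  "gen n = (\<lambda>S. if S = {n} then 1 else 0)"

definition grass_hom :: "((nat set \<Rightarrow> 'a::field) \<Rightarrow> (nat set \<Rightarrow> 'a)) \<Rightarrow> bool" where
  "grass_hom \<phi> \<longleftrightarrow> (\<forall>f\<in>grass. \<phi> f \<in> grass) \<and>
     (\<forall>f\<in>grass. \<forall>g\<in>grass. \<phi> (gadd f g) = gadd (\<phi> f) (\<phi> g)) \<and>
     (\<forall>c. \<forall>f\<in>grass. \<phi> (gscale c f) = gscale c (\<phi> f)) \<and>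
     (\<forall>f\<in>grass. \<forall>g\<in>grass. \<phi> (gmult f g) = gmult (\<phi> f) (\<phi> g)) \<and>
     \<phi> gone = gone"

definition Ecan0 :: "(nat set \<Rightarrow> 'a::field) set" where
  "Ecan0 = {f \<in> grass. \<forall>S. f S \<noteq> 0 \<longrightarrow> even (card S)}"

definition Ecan1 :: "(nat set \<Rightarrow> 'a::field) set" where
  "Ecan1 = {f \<in> grass. \<forall>S. f S \<noteq> 0 \<longrightarrow> odd (card S)}"

definition Ephi0 :: "((nat set \<Rightarrow> 'a::field) \<Rightarrow> (nat set \<Rightarrow> 'a)) \<Rightarrow> (nat set \<Rightarrow> 'a) set" where
  "Ephi0 \<phi> = {f \<in> grass. \<phi> f = f}"

definition Ephi1 :: "((nat set \<Rightarrow> 'a::field) \<Rightarrow> (nat set \<Rightarrow> 'a)) \<Rightarrow> (nat set \<Rightarrow> 'a) set" where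
  "Ephi1 \<phi> = {f \<in> grass. \<phi> f = gneg f}"

end

theory Submission
  imports Defs
begin

text \<open>Let \<open>\<psi>\<^sub>c\<close> be the automorphism of \<open>E\<close> fixing \<open>e\<^sub>1\<close> and sending \<open>e\<^sub>n\<close> to
  \<open>e\<^sub>n + c e\<^sub>1 e\<^sub>n\<close>, and \<open>\<theta>\<close> the canonical automorphism \<open>e\<^sub>S \<mapsto> (-1)\<^bsup>|S|\<^esup> e\<^sub>S\<close>.
  The homomorphisms \<open>\<phi>\<close> and \<open>\<psi>\<^sub>-\<^sub>1 \<theta> \<psi>\<^sub>1\<close> agree on the generators, hence everywhere.
  So \<open>\<phi>\<close> is an involution conjugate to \<open>\<theta>\<close>, and \<open>\<psi>\<^sub>1\<close> carries the \<open>\<pm>1\<close>-eigenspaces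
  of \<open>\<phi>\<close> onto those of \<open>\<theta>\<close>, which are \<open>E\<^sub>(\<^sub>0\<^sub>)\<close> and \<open>E\<^sub>(\<^sub>1\<^sub>)\<close>.\<close>

lemma grass_nonzeroD: "f \<in> grass \<Longrightarrow> f S \<noteq> 0 \<Longrightarrow> finite S \<and> 0 \<notin> S"
  by (auto simp: grass_def)

lemma finite_support_grass: "f \<in> grass \<Longrightarrow> finite {S. f S \<noteq> 0}"
  by (simp add: grass_def)

lemma gscale_grass: "f \<in> grass \<Longrightarrow> gscale c f \<in> grass"
  by (auto simp: grass_def gscale_def elim: finite_subset[rotated])

lemma card_add_card_Diff: "finite U \<Longrightarrow> S \<subseteq> U \<Longrightarrow> card S + card (U - S) = card U"
  by (metis card_Diff_subset card_mono finite_subset le_add_diff_inverse)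

lemma sum_Pow_insert:
  assumes "finite D" "x \<notin> D"
  shows "(\<Sum>S\<in>Pow (insert x D). F S) = (\<Sum>S\<in>Pow D. F S + F (insert x S))"
proof -
  have inj: "inj_on (insert x) (Pow D)"
    using assms(2) by (auto simp: inj_on_def)
  have "(\<Sum>S\<in>Pow (insert x D). F S) = (\<Sum>S\<in>Pow D. F S) + (\<Sum>S\<in>insert x ` Pow D. F S)"
    unfolding Pow_insert by (rule sum.union_disjoint) (use assms in auto)
  also have "(\<Sum>S\<in>insert x ` Pow D. F S) = (\<Sum>S\<in>Pow D. F (insert x S))"
    by (simp add: sum.reindex[OF inj])
  finally show ?thesis by (simp add: sum.distrib)
qed

definition gmono :: "nat set \<Rightarrow> nat set \<Rightarrow> 'a::field" where
  "gmono A = (\<lambda>U. if U = A then 1 else 0)"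

lemma gmono_grass: "finite A \<Longrightarrow> 0 \<notin> A \<Longrightarrow> gmono A \<in> grass"
  by (auto simp: grass_def gmono_def)

lemma gen_eq_gmono: "gen n = gmono {n}"
  by (simp add: gen_def gmono_def)

lemma gone_eq_gmono: "gone = gmono {}"
  by (simp add: gone_def gmono_def)

lemma gone_grass: "gone \<in> grass"
  by (simp add: gone_eq_gmono gmono_grass)

lemma gmult_eq_0:
  assumes "f \<in> grass" "g \<in> grass" "\<not> (finite U \<and> 0 \<notin> U)"
  shows "gmult f g U = 0"
proof -
  have zero: "(if S \<inter> T = {} \<and> S \<union> T = U then gsign S T * f S * g T else 0) = 0"
    if "f S \<noteq> 0" "g T \<noteq> 0" for S T
    using that assms by (auto simp: grass_def)
  show ?thesis unfolding gmult_def by (intro sum.neutral) (simp add: zero split: prod.splits)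
qed

lemma gmult_eq_sum_Pow:
  assumes f: "f \<in> grass" and g: "g \<in> grass"
  shows "gmult f g U = (\<Sum>S\<in>Pow U. gsign S (U - S) * f S * g (U - S))"
proof (cases "finite U \<and> 0 \<notin> U")
  case False
  moreover have "gsign S (U - S) * f S * g (U - S) = 0" if "S \<subseteq> U" for S
    using that False grass_nonzeroD[OF f, of S] grass_nonzeroD[OF g, of "U - S"]
    by (metis Diff_partition finite_UnI mult_eq_0_iff Diff_iff)
  ultimately show ?thesis
    using gmult_eq_0[OF f g] by (simp add: sum.neutral)
next
  case True
  let ?P = "{(S, T). f S \<noteq> 0 \<and> g T \<noteq> 0}"
  have finP: "finite ?P"
    by (rule finite_subset[of _ "{S. f S \<noteq> 0} \<times> {T. g T \<noteq> 0}"])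
       (auto simp: finite_support_grass[OF f] finite_support_grass[OF g])
  have "gmult f g U = (\<Sum>p\<in>?P. if fst p \<inter> snd p = {} \<and> fst p \<union> snd p = U
        then gsign (fst p) (snd p) * f (fst p) * g (snd p) else 0)"
    unfolding gmult_def by (rule sum.cong) (simp_all split: prod.split)
  also have "\<dots> = (\<Sum>p\<in>{p\<in>?P. fst p \<inter> snd p = {} \<and> fst p \<union> snd p = U}.
        gsign (fst p) (snd p) * f (fst p) * g (snd p))"
    by (rule sum.inter_filter[symmetric, OF finP])
  also have "\<dots> = (\<Sum>S\<in>{S\<in>Pow U. f S \<noteq> 0 \<and> g (U - S) \<noteq> 0}. gsign S (U - S) * f S * g (U - S))"
    by (rule sum.reindex_bij_witness[where i = "\<lambda>S. (S, U - S)" and j = fst])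
       (auto simp: Un_Diff Diff_triv Int_commute)
  also have "\<dots> = (\<Sum>S\<in>Pow U. gsign S (U - S) * f S * g (U - S))"
    by (rule sum.mono_neutral_left) (use True in auto)
  finally show ?thesis .
qed

lemma gmult_gmono:
  assumes A: "finite A" "0 \<notin> A" and B: "finite B" "0 \<notin> B"
  shows "gmult (gmono A) (gmono B) U = (if A \<inter> B = {} \<and> U = A \<union> B then gsign A B else 0)"
proof (cases "finite U")
  case True
  have "gmult (gmono A) (gmono B) U = (\<Sum>S\<in>Pow U. if S = A then gsign A (U - A) * (if U - A = B then 1 else 0) else 0)"
    unfolding gmult_eq_sum_Pow[OF gmono_grass[OF A] gmono_grass[OF B]]
    by (rule sum.cong) (auto simp: gmono_def)
  also have "\<dots> = (if A \<subseteq> U then gsign A (U - A) * (if U - A = B then 1 else 0) else 0)"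
    using True by simp
  also have "\<dots> = (if A \<inter> B = {} \<and> U = A \<union> B then gsign A B else 0)"
    by (auto simp: Un_Diff Diff_triv Int_commute)
  finally show ?thesis .
next
  case False
  then show ?thesis
    using A B by (auto simp: gmult_eq_sum_Pow gmono_grass)
qed

lemma finite_inversions: "finite S \<Longrightarrow> finite {(s, t). s \<in> S \<and> t \<in> T \<and> t < (s::nat)}"
  by (rule finite_subset[of _ "S \<times> {..<Max S}"]) (auto intro: less_le_trans[OF _ Max_ge])

lemma gsign_insert_1_left:
  assumes "0 \<notin> T"
  shows "gsign (insert 1 S) T = gsign S T"
proof -
  have "{(s, t). s \<in> insert 1 S \<and> t \<in> T \<and> t < s} = {(s, t). s \<in> S \<and> t \<in> T \<and> t < s}"
    using assms by auto
  then show ?thesis by (simp add: gsign_def)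
qed

lemma gsign_insert_1_right:
  assumes "finite S" "0 \<notin> S" "1 \<notin> S" "1 \<notin> T"
  shows "gsign S (insert 1 T) = (-1) ^ card S * gsign S T"
proof -
  let ?I = "{(s, t). s \<in> S \<and> t \<in> T \<and> t < s}"
  have split: "{(s, t). s \<in> S \<and> t \<in> insert 1 T \<and> t < s} = ?I \<union> (\<lambda>s. (s, 1)) ` S"
    using assms(2,3) by auto (metis One_nat_def less_one linorder_neqE_nat)
  have "card (?I \<union> (\<lambda>s. (s, 1)) ` S) = card ?I + card S"
    by (subst card_Un_disjoint) (use assms finite_inversions in \<open>auto simp: card_image inj_on_def\<close>)
  then show ?thesis unfolding gsign_def split by (simp add: power_add mult.commute)
qed

lemma gmono_insert_least:
  assumes "finite A" "0 \<notin> A" "0 < b" "\<forall>a\<in>A. b < a"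
  shows "gmono (insert b A) = gmult (gen b) (gmono A)"
proof -
  have "{(s, t). s \<in> {b} \<and> t \<in> A \<and> t < s} = {}"
    using assms(4) by auto
  then have "gsign {b} A = 1"
    unfolding gsign_def by (metis card.empty power_0)
  moreover have "b \<notin> A"
    using assms(4) by auto
  ultimately show ?thesis
    unfolding gen_eq_gmono fun_eq_iff
    by (subst gmult_gmono) (use assms in \<open>auto simp: gmono_def\<close>)
qed

lemma
  assumes "grass_hom \<phi>"
  shows grass_hom_grass: "f \<in> grass \<Longrightarrow> \<phi> f \<in> grass"
    and grass_hom_gadd: "f \<in> grass \<Longrightarrow> g \<in> grass \<Longrightarrow> \<phi> (gadd f g) = gadd (\<phi> f) (\<phi> g)"
    and grass_hom_gscale: "f \<in> grass \<Longrightarrow> \<phi> (gscale c f) = gscale c (\<phi> f)"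
    and grass_hom_gmult: "f \<in> grass \<Longrightarrow> g \<in> grass \<Longrightarrow> \<phi> (gmult f g) = gmult (\<phi> f) (\<phi> g)"
    and grass_hom_gone: "\<phi> gone = gone"
  using assms by (auto simp: grass_hom_def)

lemma grass_hom_comp: "grass_hom \<phi> \<Longrightarrow> grass_hom \<chi> \<Longrightarrow> grass_hom (\<lambda>f. \<phi> (\<chi> f))"
  unfolding grass_hom_def by auto

lemma grass_hom_eq_gmono:
  assumes \<phi>: "grass_hom \<phi>" and \<chi>: "grass_hom \<chi>"
    and gens: "\<And>n. 0 < n \<Longrightarrow> \<phi> (gen n) = \<chi> (gen n)"
    and A: "finite A" "0 \<notin> A"
  shows "\<phi> (gmono A) = \<chi> (gmono A)"
  using A
proof (induction A rule: finite_linorder_min_induct)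
  case empty
  then show ?case
    using grass_hom_gone[OF \<phi>] grass_hom_gone[OF \<chi>] by (simp flip: gone_eq_gmono)
next
  case (insert b A)
  then have b: "0 < b" and gmono_eq: "gmono (insert b A) = gmult (gen b) (gmono A)"
    by (auto intro: gmono_insert_least)
  have gb: "gen b \<in> grass" "gmono A \<in> grass"
    using insert b by (auto simp: gen_eq_gmono gmono_grass)
  have "\<phi> (gmono (insert b A)) = gmult (\<phi> (gen b)) (\<phi> (gmono A))"
    unfolding gmono_eq using \<phi> gb by (rule grass_hom_gmult)
  moreover have "\<chi> (gmono (insert b A)) = gmult (\<chi> (gen b)) (\<chi> (gmono A))"
    unfolding gmono_eq using \<chi> gb by (rule grass_hom_gmult)
  ultimately show ?case
    using insert gens[OF b] by simp
qed

lemma grass_hom_eq_on_gens: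
  assumes \<phi>: "grass_hom \<phi>" and \<chi>: "grass_hom \<chi>"
    and gens: "\<And>n. 0 < n \<Longrightarrow> \<phi> (gen n) = \<chi> (gen n)"
    and f: "f \<in> grass"
  shows "\<phi> f = \<chi> f"
proof -
  have "\<phi> f = \<chi> f" if "finite X" "f \<in> grass" "{S. f S \<noteq> 0} = X" for f X
    using that
  proof (induction X arbitrary: f rule: finite_induct)
    case empty
    then have "f = gscale 0 gone"
      by (auto simp: gscale_def)
    then have "\<psi> f = gscale 0 gone" if "grass_hom \<psi>" for \<psi>
      using grass_hom_gscale[OF that gone_grass] grass_hom_gone[OF that] by simp
    then show ?case
      using \<phi> \<chi> by simp
  next
    case (insert S X)
    then have S: "finite S" "0 \<notin> S"
      using grass_nonzeroD by blast+
    have "{T. (f(S := 0)) T \<noteq> 0} = X"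
      using insert.prems(2) insert.hyps(2) by auto
    with insert have rest: "f(S := 0) \<in> grass" "{T. (f(S := 0)) T \<noteq> 0} = X"
      by (auto simp: grass_def)
    have split: "f = gadd (gscale (f S) (gmono S)) (f(S := 0))"
      by (auto simp: gadd_def gscale_def gmono_def)
    have "\<psi> f = gadd (gscale (f S) (\<psi> (gmono S))) (\<psi> (f(S := 0)))" if "grass_hom \<psi>" for \<psi>
      by (subst split, simp only: grass_hom_gadd[OF that] grass_hom_gscale[OF that] gscale_grass
          gmono_grass[OF S] rest(1))
    then show ?case
      using insert.IH[OF rest] grass_hom_eq_gmono[OF \<phi> \<chi> gens S] \<phi> \<chi> by metis
  qed
  with f show ?thesis
    using finite_support_grass[OF f] by blast
qed

text \<open>\<open>gshear c\<close> is \<open>\<psi>\<^sub>c x = x + c e\<^sub>1 x\<^sub>1\<close>, where \<open>x\<^sub>1\<close> is the odd part of \<open>x\<close>; since \<open>1\<close>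
  is the least index, \<open>e\<^sub>1 e\<^sub>S = e\<^bsub>S \<union> {1}\<^esub>\<close> without sign.\<close>

definition gshear :: "'a::field \<Rightarrow> (nat set \<Rightarrow> 'a) \<Rightarrow> nat set \<Rightarrow> 'a" where
  "gshear c f = (\<lambda>U. f U + (if 1 \<in> U \<and> odd (card (U - {1})) then c * f (U - {1}) else 0))"

lemma gshear_notin: "1 \<notin> U \<Longrightarrow> gshear c f U = f U"
  by (simp add: gshear_def)

lemma gshear_insert_1:
  "1 \<notin> X \<Longrightarrow> gshear c f (insert 1 X) = f (insert 1 X) + (if odd (card X) then c * f X else 0)"
  by (simp add: gshear_def)

lemma gshear_gshear_neg: "gshear c (gshear (- c) f) = f"
  by (simp add: gshear_def fun_eq_iff del: card_Diff_insert)

lemma gshear_neg_gshear: "gshear (- c) (gshear c f) = f"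
  using gshear_gshear_neg[of "- c" f] by simp

lemma gshear_gneg: "gshear c (gneg f) = gneg (gshear c f)"
  by (simp add: gshear_def gneg_def fun_eq_iff del: card_Diff_insert)

lemma gshear_grass:
  assumes f: "f \<in> grass" shows "gshear c f \<in> grass"
proof -
  have nz: "f U \<noteq> 0 \<or> (1 \<in> U \<and> f (U - {1}) \<noteq> 0)" if "gshear c f U \<noteq> 0" for U
    using that by (auto simp: gshear_def split: if_splits)
  have "{U. gshear c f U \<noteq> 0} \<subseteq> {S. f S \<noteq> 0} \<union> insert 1 ` {S. f S \<noteq> 0}"
    using nz by (fastforce simp: image_iff)
  then have "finite {U. gshear c f U \<noteq> 0}"
    by (rule finite_subset) (simp add: finite_support_grass[OF f])
  moreover have "finite U \<and> 0 \<notin> U" if "gshear c f U \<noteq> 0" for U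
    using nz[OF that] grass_nonzeroD[OF f, of U] grass_nonzeroD[OF f, of "U - {1}"] by auto
  ultimately show ?thesis unfolding grass_def by simp
qed

text \<open>The cross terms combine because \<open>(-1)\<^bsup>|S|\<^esup> [|T| odd] + [|S| odd] = [|S| + |T| odd]\<close>;
  in algebra terms, \<open>\<psi>\<^sub>c\<close> is multiplicative since \<open>e\<^sub>1 x\<^sub>1 y + x e\<^sub>1 y\<^sub>1 = e\<^sub>1 (xy)\<^sub>1\<close> and
  \<open>e\<^sub>1 x\<^sub>1 e\<^sub>1 y\<^sub>1 = 0\<close>, subscript \<open>1\<close> denoting odd parts.\<close>

lemma gshear_gmult_term:
  assumes "finite S" "0 \<notin> S" "1 \<notin> S" "0 \<notin> T" "1 \<notin> T"
  shows "gsign S (insert 1 T) * gshear c f S * gshear c g (insert 1 T)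
       + gsign (insert 1 S) T * gshear c f (insert 1 S) * gshear c g T
       = gsign S (insert 1 T) * f S * g (insert 1 T) + gsign (insert 1 S) T * f (insert 1 S) * g T
       + (if odd (card S + card T) then c * (gsign S T * f S * g T) else 0)"
  unfolding gshear_notin[OF assms(3)] gshear_notin[OF assms(5)]
    gshear_insert_1[OF assms(3)] gshear_insert_1[OF assms(5)]
    gsign_insert_1_left[OF assms(4)] gsign_insert_1_right[OF assms(1-3,5)]
  by (cases "even (card S)"; cases "even (card T)") (simp_all add: algebra_simps)

lemma gmult_insert_1_eq_sum_Pow:
  assumes "f \<in> grass" "g \<in> grass" "finite D" "1 \<notin> D"
  shows "gmult f g (insert 1 D) = (\<Sum>S\<in>Pow D.
     gsign S (insert 1 (D - S)) * f S * g (insert 1 (D - S))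
     + gsign (insert 1 S) (D - S) * f (insert 1 S) * g (D - S))"
proof -
  have "insert 1 D - S = insert 1 (D - S)" "insert 1 D - insert 1 S = D - S" if "S \<subseteq> D" for S
    using that assms(4) by auto
  then show ?thesis
    unfolding gmult_eq_sum_Pow[OF assms(1,2)] sum_Pow_insert[OF assms(3,4)]
    by (intro sum.cong) simp_all
qed

lemma gmult_gshear_insert_1:
  assumes f: "f \<in> grass" and g: "g \<in> grass" and D: "finite D" "0 \<notin> D" "1 \<notin> D"
  shows "gmult (gshear c f) (gshear c g) (insert 1 D)
       = gmult f g (insert 1 D) + (if odd (card D) then c * gmult f g D else 0)"
proof -
  have summand: "gsign S (insert 1 (D - S)) * gshear c f S * gshear c g (insert 1 (D - S))
       + gsign (insert 1 S) (D - S) * gshear c f (insert 1 S) * gshear c g (D - S)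
     = gsign S (insert 1 (D - S)) * f S * g (insert 1 (D - S))
       + gsign (insert 1 S) (D - S) * f (insert 1 S) * g (D - S)
       + (if odd (card D) then c * (gsign S (D - S) * f S * g (D - S)) else 0)"
    if "S \<in> Pow D" for S
  proof -
    have "card S + card (D - S) = card D"
      using that D(1) by (simp add: card_add_card_Diff)
    with that D show ?thesis
      by (subst gshear_gmult_term) (auto intro: finite_subset)
  qed
  have "gmult (gshear c f) (gshear c g) (insert 1 D) = (\<Sum>S\<in>Pow D.
       gsign S (insert 1 (D - S)) * f S * g (insert 1 (D - S))
       + gsign (insert 1 S) (D - S) * f (insert 1 S) * g (D - S)
       + (if odd (card D) then c * (gsign S (D - S) * f S * g (D - S)) else 0))"
    unfolding gmult_insert_1_eq_sum_Pow[OF gshear_grass[OF f] gshear_grass[OF g] D(1,3)]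
    by (rule sum.cong[OF refl summand])
  then show ?thesis
    unfolding gmult_insert_1_eq_sum_Pow[OF f g D(1,3)] gmult_eq_sum_Pow[OF f g, of D]
    by (simp add: sum.distrib sum_distrib_left)
qed

lemma gshear_gmult:
  assumes f: "f \<in> grass" and g: "g \<in> grass"
  shows "gshear c (gmult f g) = gmult (gshear c f) (gshear c g)"
proof
  fix U :: "nat set"
  consider "\<not> (finite U \<and> 0 \<notin> U)" | "finite U" "1 \<notin> U"
    | D where "U = insert 1 D" "finite D" "0 \<notin> D" "1 \<notin> D"
    by (metis Diff_iff finite_Diff insert_Diff singletonI)
  then show "gshear c (gmult f g) U = gmult (gshear c f) (gshear c g) U"
  proof cases
    case 1
    then have "\<not> (finite (U - {1}) \<and> 0 \<notin> U - {1})" by auto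
    with 1 show ?thesis
      by (simp add: gshear_def[of c "gmult f g"] gmult_eq_0 f g gshear_grass)
  next
    case 2
    then have "S \<subseteq> U \<Longrightarrow> 1 \<notin> S \<and> 1 \<notin> U - S" for S by auto
    with 2 show ?thesis
      by (simp add: gshear_notin gmult_eq_sum_Pow f g gshear_grass)
  next
    case 3
    then show ?thesis
      using gshear_insert_1[of D c "gmult f g"] gmult_gshear_insert_1[OF f g 3(2-4)] by simp
  qed
qed

lemma gshear_gadd: "gshear c (gadd f g) = gadd (gshear c f) (gshear c g)"
  by (simp add: gshear_def gadd_def algebra_simps fun_eq_iff del: card_Diff_insert)

lemma gshear_gscale: "gshear c (gscale d f) = gscale d (gshear c f)"
  by (simp add: gshear_def gscale_def algebra_simps fun_eq_iff del: card_Diff_insert)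

lemma gshear_gone: "gshear c gone = gone"
  by (auto simp: gshear_def gone_def fun_eq_iff subset_singleton_iff simp del: card_Diff_insert)

lemma grass_hom_gshear: "grass_hom (gshear c)"
  by (simp add: grass_hom_def gshear_grass gshear_gadd gshear_gscale gshear_gmult gshear_gone)

lemma gshear_gmono_mem: "1 \<in> A \<Longrightarrow> gshear c (gmono A) = gmono A"
  by (auto simp: gshear_def gmono_def fun_eq_iff)

lemma gshear_gmono_singleton:
  "1 < n \<Longrightarrow> gshear c (gmono {n}) = gadd (gmono {n}) (gscale c (gmono {1, n}))"
  by (auto simp: gshear_def gmono_def gadd_def gscale_def fun_eq_iff simp del: card_Diff_insert)

lemma bij_betw_gshear: "bij_betw (gshear c) grass grass"
  by (rule bij_betw_byWitness[where f' = "gshear (- c)"])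
    (auto simp: gshear_gshear_neg gshear_neg_gshear gshear_grass)

definition ginvol :: "(nat set \<Rightarrow> 'a::field) \<Rightarrow> nat set \<Rightarrow> 'a" where
  "ginvol f = (\<lambda>U. (-1) ^ card U * f U)"

lemma ginvol_ginvol: "ginvol (ginvol f) = f"
  by (simp add: ginvol_def fun_eq_iff flip: power_add mult.assoc)

lemma ginvol_grass: "f \<in> grass \<Longrightarrow> ginvol f \<in> grass"
  by (auto simp: grass_def ginvol_def)

lemma ginvol_gmult:
  assumes f: "f \<in> grass" and g: "g \<in> grass"
  shows "ginvol (gmult f g) = gmult (ginvol f) (ginvol g)"
proof
  fix U :: "nat set"
  show "ginvol (gmult f g) U = gmult (ginvol f) (ginvol g) U"
  proof (cases "finite U")
    case True
    have sign: "(-1) ^ card U = (-1) ^ card S * ((-1) ^ card (U - S) :: 'a)" if "S \<in> Pow U" for S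
      using that True by (simp add: card_add_card_Diff flip: power_add)
    have "ginvol (gmult f g) U = (\<Sum>S\<in>Pow U. (-1) ^ card U * (gsign S (U - S) * f S * g (U - S)))"
      by (simp add: ginvol_def gmult_eq_sum_Pow[OF f g] sum_distrib_left)
    also have "\<dots> = (\<Sum>S\<in>Pow U. gsign S (U - S) * ginvol f S * ginvol g (U - S))"
      by (rule sum.cong) (simp_all add: sign ginvol_def algebra_simps)
    also have "\<dots> = gmult (ginvol f) (ginvol g) U"
      by (rule gmult_eq_sum_Pow[OF ginvol_grass[OF f] ginvol_grass[OF g], symmetric])
    finally show ?thesis .
  next
    case False
    then show ?thesis
      by (simp add: ginvol_def[of "gmult f g"] gmult_eq_sum_Pow f g ginvol_grass)
  qed
qed

lemma ginvol_gadd: "ginvol (gadd f g) = gadd (ginvol f) (ginvol g)"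
  by (simp add: ginvol_def gadd_def algebra_simps)

lemma ginvol_gscale: "ginvol (gscale d f) = gscale d (ginvol f)"
  by (simp add: ginvol_def gscale_def algebra_simps)

lemma ginvol_gmono: "ginvol (gmono A) = gscale ((-1) ^ card A) (gmono A)"
  by (simp add: ginvol_def gscale_def gmono_def fun_eq_iff)

lemma grass_hom_ginvol: "grass_hom ginvol"
proof -
  have "ginvol gone = gone"
    by (simp add: gone_eq_gmono ginvol_gmono gscale_def)
  then show ?thesis
    by (simp add: grass_hom_def ginvol_grass ginvol_gadd ginvol_gscale ginvol_gmult)
qed

lemma ginvol_fixed_eq_Ecan0: "{f \<in> grass. ginvol f = f} = (Ecan0 :: (nat set \<Rightarrow> 'a::field_char_0) set)"
proof -
  have "(-1) ^ card U * x = x \<longleftrightarrow> (odd (card U) \<longrightarrow> x = 0)" for U :: "nat set" and x :: 'a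
    by (cases "even (card U)") auto
  then show ?thesis
    by (auto simp: Ecan0_def ginvol_def fun_eq_iff)
qed

lemma ginvol_antifixed_eq_Ecan1:
  "{f \<in> grass. ginvol f = gneg f} = (Ecan1 :: (nat set \<Rightarrow> 'a::field_char_0) set)"
proof -
  have "(-1) ^ card U * x = - x \<longleftrightarrow> (even (card U) \<longrightarrow> x = 0)" for U :: "nat set" and x :: 'a
    by (cases "even (card U)") auto
  then show ?thesis
    by (auto simp: Ecan1_def ginvol_def gneg_def fun_eq_iff)
qed

definition gconj :: "(nat set \<Rightarrow> 'a::field) \<Rightarrow> nat set \<Rightarrow> 'a" where
  "gconj f = gshear (-1) (ginvol (gshear 1 f))"

lemma grass_hom_gconj: "grass_hom gconj"
  unfolding gconj_def[abs_def]
  by (rule grass_hom_comp[OF grass_hom_gshear grass_hom_comp[OF grass_hom_ginvol grass_hom_gshear]])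

lemma gconj_gconj: "gconj (gconj f) = f"
  by (simp add: gconj_def ginvol_ginvol gshear_gshear_neg gshear_neg_gshear)

lemma gconj_gen_1: "gconj (gen 1) = gneg (gen 1)"
proof -
  have "gconj (gmono {1}) = gscale (-1) (gmono {1})"
    by (simp add: gconj_def gshear_gmono_mem gshear_gscale ginvol_gmono)
  then show ?thesis
    by (simp add: gen_eq_gmono gscale_def gneg_def)
qed

lemma gconj_gen:
  assumes "1 < n"
  shows "gconj (gen n) = gadd (gneg (gen n)) (gscale 2 (gmult (gen 1) (gen n :: nat set \<Rightarrow> 'a::field)))"
proof -
  have "gmult (gen 1) (gmono {n}) = (gmono {1, n} :: nat set \<Rightarrow> 'a)"
    by (rule gmono_insert_least[symmetric]) (use assms in auto)
  moreover have "gconj (gmono {n}) = gadd (gneg (gmono {n})) (gscale 2 (gmono {1, n} :: nat set \<Rightarrow> 'a))"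
    using assms
    by (simp add: gconj_def gshear_gmono_singleton gshear_gmono_mem gshear_gadd gshear_gscale
        ginvol_gadd ginvol_gscale ginvol_gmono)
      (simp add: gadd_def gscale_def gneg_def fun_eq_iff algebra_simps)
  ultimately show ?thesis
    unfolding gen_eq_gmono[of n] by simp
qed

lemma image_eigenspace_conj:
  assumes inv: "\<And>x. \<psi> (\<psi>' x) = x" "\<And>x. \<psi>' (\<psi> x) = x"
    and closed: "\<psi> ` A \<subseteq> A" "\<psi>' ` A \<subseteq> A"
    and comm: "\<And>x. \<psi> (h x) = h (\<psi> x)"
    and conj: "\<And>x. x \<in> A \<Longrightarrow> \<phi> x = \<psi>' (\<theta> (\<psi> x))"
  shows "\<psi> ` {x \<in> A. \<phi> x = h x} = {y \<in> A. \<theta> y = h y}"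
proof
  show "\<psi> ` {x \<in> A. \<phi> x = h x} \<subseteq> {y \<in> A. \<theta> y = h y}"
  proof clarify
    fix x assume x: "x \<in> A" "\<phi> x = h x"
    have "\<theta> (\<psi> x) = \<psi> (\<phi> x)"
      using conj[OF x(1)] inv(1) by simp
    also have "\<dots> = h (\<psi> x)"
      using x(2) comm by simp
    finally show "\<psi> x \<in> A \<and> \<theta> (\<psi> x) = h (\<psi> x)"
      using closed(1) x(1) by blast
  qed
next
  show "{y \<in> A. \<theta> y = h y} \<subseteq> \<psi> ` {x \<in> A. \<phi> x = h x}"
  proof clarify
    fix y assume y: "y \<in> A" "\<theta> y = h y"
    have x: "\<psi>' y \<in> A"
      using closed(2) y(1) by blast
    have "\<phi> (\<psi>' y) = \<psi>' (h (\<psi> (\<psi>' y)))"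
      using conj[OF x] y(2) inv(1) by simp
    also have "\<dots> = h (\<psi>' y)"
      by (simp only: comm[symmetric] inv(2))
    finally have "\<psi>' y \<in> {x \<in> A. \<phi> x = h x}"
      using x by simp
    then show "y \<in> \<psi> ` {x \<in> A. \<phi> x = h x}"
      by (rule image_eqI[rotated]) (simp add: inv(1))
  qed
qed

lemma grass_hom_eq_gconj:
  assumes hom: "grass_hom \<phi>"
    and e1: "\<phi> (gen 1) = gneg (gen 1)"
    and en: "\<And>n. n > 1 \<Longrightarrow> \<phi> (gen n) = gadd (gneg (gen n)) (gscale 2 (gmult (gen 1) (gen n)))"
    and f: "f \<in> grass"
  shows "\<phi> f = gconj f"
proof (rule grass_hom_eq_on_gens[OF hom grass_hom_gconj _ f])
  fix n :: nat
  assume "0 < n"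
  then consider "n = 1" | "1 < n"
    by linarith
  then show "\<phi> (gen n) = gconj (gen n)"
  proof cases
    case 1
    then show ?thesis
      by (simp only: e1 gconj_gen_1)
  next
    case 2
    then show ?thesis
      by (simp only: en gconj_gen)
  qed
qed

lemma gshear_image_Ephi:
  fixes \<phi> :: "(nat set \<Rightarrow> 'a::field_char_0) \<Rightarrow> (nat set \<Rightarrow> 'a)"
  assumes "\<And>f. f \<in> grass \<Longrightarrow> \<phi> f = gconj f"
  shows "gshear 1 ` Ephi0 \<phi> = Ecan0" and "gshear 1 ` Ephi1 \<phi> = Ecan1"
  unfolding Ephi0_def Ephi1_def ginvol_fixed_eq_Ecan0[symmetric] ginvol_antifixed_eq_Ecan1[symmetric]
  by (rule image_eigenspace_conj[where \<psi>' = "gshear (-1)"];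
      use assms[unfolded gconj_def] in \<open>simp add: gshear_gshear_neg gshear_neg_gshear gshear_grass
        gshear_gneg image_subset_iff\<close>)+

theorem mainTheorem10:
  fixes \<phi> :: "(nat set \<Rightarrow> 'a::field_char_0) \<Rightarrow> (nat set \<Rightarrow> 'a)"
  assumes hom: "grass_hom \<phi>"
    and e1: "\<phi> (gen 1) = gneg (gen 1)"
    and en: "\<And>n. n > 1 \<Longrightarrow> \<phi> (gen n) = gadd (gneg (gen n)) (gscale 2 (gmult (gen 1) (gen n)))"
  shows "bij_betw \<phi> grass grass
         \<and> (\<forall>f\<in>grass. \<phi> (\<phi> f) = f) \<and> (\<exists>f\<in>grass. \<phi> f \<noteq> f)
         \<and> (\<exists>\<psi>. grass_hom \<psi> \<and> bij_betw \<psi> grass grass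
                \<and> \<psi> ` Ephi0 \<phi> = Ecan0 \<and> \<psi> ` Ephi1 \<phi> = Ecan1)"
proof -
  have conj: "\<phi> f = gconj f" if "f \<in> grass" for f
    using grass_hom_eq_gconj[OF hom e1 en that] .
  have invol: "\<forall>f\<in>grass. \<phi> (\<phi> f) = f"
    using conj grass_hom_grass[OF hom] by (simp add: gconj_gconj)
  have "bij_betw \<phi> grass grass"
    by (rule bij_betw_byWitness[where f' = \<phi>]) (use invol grass_hom_grass[OF hom] in auto)
  moreover have "gen 1 \<in> grass"
    by (simp add: gen_eq_gmono gmono_grass)
  moreover have "\<phi> (gen 1) \<noteq> gen 1"
    using e1 by (auto simp: gen_def gneg_def fun_eq_iff)
  moreover have "grass_hom (gshear 1)" "bij_betw (gshear 1) grass grass"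
    by (rule grass_hom_gshear bij_betw_gshear)+
  ultimately show ?thesis
    using invol gshear_image_Ephi[OF conj] by blast
qed

end
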